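(* Let $\mu$ be a finite compactly supported complex Borel measure on $\mathbb{R}^d$. Then the following are equivalent: (a) $\mu$ is continuous, i.e. $\mu(\{x\})=0$ for every $x\in\mathbb{R}^d$; (b) the measure $\mu_\zeta$ is continuous for $\sigma$-almost every $\zeta\in S$.
   Context: $S=\{\zeta\in\mathbb{R}^d:|\zeta|=1\}$ is the unit sphere with surface (Lebesgue) measure $\sigma$. For $\zeta\in S$, $\mu_\zeta$ is the complex Borel measure on $\mathbb{R}$ defined as the pushforward of $\mu$ under $x\mapsto x\cdot\zeta$, i.e. $\int\phi\,d\mu_\zeta=\int\phi(x\cdot\zeta)\,d\mu(x)$. *)

theory Defs
  imports "HOL-Analysis.Analysis"
begin

text \<open>A complex Borel measure on a Euclidean space: a complex-valued, countably
additive set function on the Borel sets (values on non-Borel sets are irrelevant).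
Complex values make it automatically finite (bounded total variation).\<close>
definition complex_borel_measure :: "('a::euclidean_space set \<Rightarrow> complex) \<Rightarrow> bool" where
  "complex_borel_measure \<mu> \<longleftrightarrow>
     \<mu> {} = 0 \<and>
     (\<forall>A :: nat \<Rightarrow> 'a set. range A \<subseteq> sets borel \<longrightarrow> disjoint_family A \<longrightarrow>
        (\<lambda>n. \<mu> (A n)) sums \<mu> (\<Union>n. A n))"

definition compactly_supported :: "('a::euclidean_space set \<Rightarrow> complex) \<Rightarrow> bool" where
  "compactly_supported \<mu> \<longleftrightarrow>
     (\<exists>K. compact K \<and> (\<forall>A \<in> sets borel. A \<inter> K = {} \<longrightarrow> \<mu> A = 0))"

definition continuous_measure :: "('a set \<Rightarrow> complex) \<Rightarrow> bool" where
  "continuous_measure \<mu> \<longleftrightarrow> (\<forall>x. \<mu> {x} = 0)"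

definition proj_measure :: "('a::euclidean_space set \<Rightarrow> complex) \<Rightarrow> 'a \<Rightarrow> (real set \<Rightarrow> complex)" where
  "proj_measure \<mu> \<zeta> = (\<lambda>B. \<mu> ((\<lambda>x. x \<bullet> \<zeta>) -` B))"

text \<open>Surface measure on the unit sphere S, defined via polar coordinates:
\<sigma>(A) = d * \<lambda>{r \<zeta> : 0 < r < 1, \<zeta> \<in> A}, i.e. d times the pushforward of
Lebesgue measure on the punctured unit ball under x \<mapsto> x / |x|.\<close>
definition sphere_measure :: "'a::euclidean_space measure" where
  "sphere_measure =
     density
       (distr (restrict_space lborel (ball 0 1 - {0})) (restrict_space borel (sphere 0 1))
          (\<lambda>x. x /\<^sub>R norm x))
       (\<lambda>_. ennreal (real DIM('a)))"

end

theory Submission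
  imports Defs
begin

text \<open>
  If \<open>x\<^sub>0\<close> is an atom of \<open>\<mu>\<close>, then for every direction \<open>\<zeta>\<close> the hyperplane
  \<open>{x. x \<bullet> \<zeta> = x\<^sub>0 \<bullet> \<zeta>}\<close> carries the mass \<open>\<mu> {x\<^sub>0}\<close> plus that of the rest of the hyperplane.
  For a finite positive measure \<open>\<nu>\<close> dominating \<open>\<mu>\<close>, that rest is \<open>\<nu>\<close>-null for \<open>\<sigma>\<close>-almost
  every \<open>\<zeta>\<close>: a nonzero vector is orthogonal only to a \<open>\<sigma>\<close>-null set of directions, and Fubini
  exchanges "for \<open>\<nu>\<close>-almost every \<open>x\<close>" with "for \<open>\<sigma>\<close>-almost every \<open>\<zeta>\<close>".
  The same argument for pairs \<open>(x, y)\<close> under \<open>\<nu> \<otimes> \<nu>\<close> shows that for almost every \<open>\<zeta>\<close> each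
  hyperplane orthogonal to \<open>\<zeta>\<close> contains, up to \<open>\<nu>\<close>-null sets, at most one point, and hence
  carries no mass when \<open>\<mu>\<close> is continuous. The dominating measure is assembled from the
  positive variations of the real signed measures \<open>Re (c \<mu>)\<close>, which are finite because a
  countably additive real set function is bounded.
\<close>

section \<open>Real signed measures\<close>

definition signed_measure :: "'a measure \<Rightarrow> ('a set \<Rightarrow> real) \<Rightarrow> bool" where
  "signed_measure M f \<longleftrightarrow> f {} = 0 \<and>
     (\<forall>A. range A \<subseteq> sets M \<longrightarrow> disjoint_family A \<longrightarrow> (\<lambda>n. f (A n)) sums f (\<Union>n. A n))"

definition positive_variation :: "'a measure \<Rightarrow> ('a set \<Rightarrow> real) \<Rightarrow> 'a set \<Rightarrow> real" where
  "positive_variation M f A = (SUP B\<in>{B \<in> sets M. B \<subseteq> A}. f B)"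

context
  fixes M :: "'a measure" and f :: "'a set \<Rightarrow> real"
  assumes f: "signed_measure M f"
begin

lemma signed_measure_empty: "f {} = 0"
  using f by (simp add: signed_measure_def)

lemma signed_measure_sums:
  "range A \<subseteq> sets M \<Longrightarrow> disjoint_family A \<Longrightarrow> (\<lambda>n. f (A n)) sums f (\<Union>n. A n)"
  using f by (simp add: signed_measure_def)

lemma signed_measure_Un:
  assumes "A \<in> sets M" "B \<in> sets M" "A \<inter> B = {}"
  shows "f (A \<union> B) = f A + f B"
proof -
  have "(\<lambda>n. f (binaryset A B n)) sums f (\<Union>n. binaryset A B n)"
    using assms by (intro signed_measure_sums)
      (auto simp: range_binaryset_eq disjoint_family_on_def binaryset_def)
  then show ?thesis
    using binaryset_sums[of f, OF signed_measure_empty] by (simp add: UN_binaryset_eq sums_unique2)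
qed

lemma signed_measure_Diff:
  assumes "A \<in> sets M" "B \<in> sets M" "B \<subseteq> A"
  shows "f A = f B + f (A - B)"
  using signed_measure_Un[of B "A - B"] assms by (simp add: Un_absorb1 Diff_partition)

lemma signed_measure_UN_lessThan:
  fixes N :: nat
  assumes "\<And>n. n < N \<Longrightarrow> B n \<in> sets M" and "disjoint_family_on B {..<N}"
  shows "f (\<Union>n<N. B n) = (\<Sum>n<N. f (B n))"
  using assms
proof (induction N)
  case 0
  then show ?case by (simp add: signed_measure_empty)
next
  case (Suc N)
  have "(\<Union>n<Suc N. B n) = (\<Union>n<N. B n) \<union> B N"
    by (auto simp: lessThan_Suc)
  moreover have "B n \<inter> B N = {}" if "n < N" for n
    using disjoint_family_onD[OF Suc.prems(2), of n N] that by simp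
  then have "(\<Union>n<N. B n) \<inter> B N = {}"
    by blast
  moreover have "f (\<Union>n<N. B n) = (\<Sum>n<N. f (B n))"
    using Suc disjoint_family_on_mono[OF _ Suc.prems(2), of "{..<N}"] by auto
  ultimately show ?case
    using Suc.prems(1) by (simp add: signed_measure_Un sets.finite_UN)
qed

lemma signed_measure_split_unbounded:
  assumes E: "E \<in> sets M" and unbounded: "\<forall>K. \<exists>B\<in>sets M. B \<subseteq> E \<and> K < \<bar>f B\<bar>"
  shows "\<exists>E'\<in>sets M. E' \<subseteq> E \<and> (\<forall>K. \<exists>B\<in>sets M. B \<subseteq> E' \<and> K < \<bar>f B\<bar>) \<and> 1 < \<bar>f (E - E')\<bar>"
proof -
  obtain B where B: "B \<in> sets M" "B \<subseteq> E" "\<bar>f E\<bar> + 1 < \<bar>f B\<bar>"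
    using unbounded by blast
  have EB: "E - B \<in> sets M"
    using B E by auto
  have "f E = f B + f (E - B)"
    using signed_measure_Diff[OF E B(1,2)] .
  then have big: "1 < \<bar>f B\<bar>" "1 < \<bar>f (E - B)\<bar>"
    using B(3) by linarith+
  have "(\<forall>K. \<exists>C\<in>sets M. C \<subseteq> B \<and> K < \<bar>f C\<bar>) \<or> (\<forall>K. \<exists>C\<in>sets M. C \<subseteq> E - B \<and> K < \<bar>f C\<bar>)"
  proof (rule ccontr)
    assume "\<not> ?thesis"
    then obtain K1 K2 where K1: "\<And>C. C \<in> sets M \<Longrightarrow> C \<subseteq> B \<Longrightarrow> \<bar>f C\<bar> \<le> K1"
      and K2: "\<And>C. C \<in> sets M \<Longrightarrow> C \<subseteq> E - B \<Longrightarrow> \<bar>f C\<bar> \<le> K2"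
      by (meson not_less)
    obtain C where C: "C \<in> sets M" "C \<subseteq> E" "K1 + K2 < \<bar>f C\<bar>"
      using unbounded by blast
    have "C \<inter> B \<in> sets M" "C \<inter> (E - B) \<in> sets M"
      using B(1) C(1) EB by auto
    moreover have "C - C \<inter> B = C \<inter> (E - B)"
      using C(2) by blast
    ultimately have "f C = f (C \<inter> B) + f (C \<inter> (E - B))"
      using signed_measure_Diff[OF C(1), of "C \<inter> B"] by simp
    moreover have "\<bar>f (C \<inter> B)\<bar> \<le> K1" "\<bar>f (C \<inter> (E - B))\<bar> \<le> K2"
      using \<open>C \<inter> B \<in> sets M\<close> \<open>C \<inter> (E - B) \<in> sets M\<close> by (auto intro!: K1 K2)
    ultimately show False
      using C(3) by linarith
  qed
  then show ?thesis
  proof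
    assume "\<forall>K. \<exists>C\<in>sets M. C \<subseteq> B \<and> K < \<bar>f C\<bar>"
    then show ?thesis
      using B(1,2) big(2) by blast
  next
    assume "\<forall>K. \<exists>C\<in>sets M. C \<subseteq> E - B \<and> K < \<bar>f C\<bar>"
    moreover have "E - (E - B) = B"
      using B(2) by blast
    ultimately show ?thesis
      using EB big(1) by (intro bexI[of _ "E - B"]) auto
  qed
qed

text \<open>Otherwise repeated splitting yields a decreasing chain of sets on which \<open>f\<close> is unbounded,
  whose successive differences are disjoint with mass above \<open>1\<close>, so the series of their
  masses cannot converge.\<close>
lemma signed_measure_bounded: "\<exists>K. \<forall>A\<in>sets M. \<bar>f A\<bar> \<le> K"
proof (rule ccontr)
  define unbounded where "unbounded E \<longleftrightarrow> (\<forall>K. \<exists>B\<in>sets M. B \<subseteq> E \<and> K < \<bar>f B\<bar>)" for E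
  assume "\<not> ?thesis"
  then have "unbounded (space M)"
    unfolding unbounded_def by (meson not_le sets.sets_into_space)
  have "\<exists>E. \<forall>n. (E n \<in> sets M \<and> unbounded (E n)) \<and>
      (E (Suc n) \<subseteq> E n \<and> 1 < \<bar>f (E n - E (Suc n))\<bar>)"
  proof (rule dependent_nat_choice[where P = "\<lambda>_ E. E \<in> sets M \<and> unbounded E"
        and Q = "\<lambda>_ E E'. E' \<subseteq> E \<and> 1 < \<bar>f (E - E')\<bar>"])
    show "\<exists>E. E \<in> sets M \<and> unbounded E"
      using \<open>unbounded (space M)\<close> sets.top by blast
  next
    fix E and n :: nat
    assume "E \<in> sets M \<and> unbounded E"
    then obtain E' where "E' \<in> sets M" "E' \<subseteq> E" "unbounded E'" "1 < \<bar>f (E - E')\<bar>"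
      using signed_measure_split_unbounded[of E] unfolding unbounded_def by auto
    then show "\<exists>E'. (E' \<in> sets M \<and> unbounded E') \<and> E' \<subseteq> E \<and> 1 < \<bar>f (E - E')\<bar>"
      by blast
  qed
  then obtain E where E: "\<And>n. E n \<in> sets M"
    and shrink: "\<And>n. E (Suc n) \<subseteq> E n" and jump: "\<And>n. 1 < \<bar>f (E n - E (Suc n))\<bar>"
    by blast
  define F where "F n = E n - E (Suc n)" for n
  have "(\<lambda>n. - E (Suc n) - - E n) = F"
    by (auto simp: F_def)
  then have "disjoint_family F"
    using disjoint_family_Suc[of "\<lambda>n. - E n"] shrink by auto
  moreover have "range F \<subseteq> sets M"
    using E by (auto simp: F_def)
  ultimately have "(\<lambda>n. f (F n)) \<longlonglongrightarrow> 0"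
    by (intro summable_LIMSEQ_zero sums_summable[OF signed_measure_sums])
  then obtain n where "\<bar>f (F n)\<bar> < 1"
    using LIMSEQ_D[of "\<lambda>n. f (F n)" 0 1] by auto
  then show False
    using jump[of n] by (simp add: F_def)
qed

lemma bdd_above_signed_measure: "bdd_above (f ` {B \<in> sets M. B \<subseteq> A})"
  using signed_measure_bounded by (force simp: bdd_above_def abs_le_iff)

lemma positive_variation_upper: "B \<in> sets M \<Longrightarrow> B \<subseteq> A \<Longrightarrow> f B \<le> positive_variation M f A"
  unfolding positive_variation_def by (rule cSUP_upper[OF _ bdd_above_signed_measure]) simp

lemma positive_variation_least:
  "(\<And>B. B \<in> sets M \<Longrightarrow> B \<subseteq> A \<Longrightarrow> f B \<le> y) \<Longrightarrow> positive_variation M f A \<le> y"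
  unfolding positive_variation_def by (rule cSUP_least) auto

lemma positive_variation_nonneg: "0 \<le> positive_variation M f A"
  using positive_variation_upper[of "{}" A] signed_measure_empty by simp

lemma positive_variation_empty: "positive_variation M f {} = 0"
  using positive_variation_least[of "{}" 0] positive_variation_nonneg[of "{}"]
  by (simp add: signed_measure_empty)

lemma positive_variation_sum_le:
  fixes A :: "nat \<Rightarrow> 'a set"
  assumes "range A \<subseteq> sets M" "disjoint_family A"
  shows "(\<Sum>n<N. positive_variation M f (A n)) \<le> positive_variation M f (\<Union>n. A n)"
proof (rule field_le_epsilon)
  fix e :: real
  assume "0 < e"
  define d where "d = e / (real N + 1)"
  have "d > 0"
    using \<open>0 < e\<close> by (simp add: d_def)
  have "\<exists>B. B \<in> sets M \<and> B \<subseteq> A n \<and> positive_variation M f (A n) - d < f B" for n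
  proof (rule ccontr)
    assume "\<not> ?thesis"
    then have "positive_variation M f (A n) \<le> positive_variation M f (A n) - d"
      by (intro positive_variation_least) (auto simp: not_less)
    then show False
      using \<open>d > 0\<close> by simp
  qed
  then obtain B where B: "\<And>n. B n \<in> sets M" "\<And>n. B n \<subseteq> A n"
    and approx: "\<And>n. positive_variation M f (A n) - d < f (B n)"
    by metis
  have "disjoint_family_on B {..<N}"
    using disjoint_family_on_bisimulation[OF assms(2)] B(2)
    unfolding disjoint_family_on_def by blast
  have "(\<Sum>n<N. positive_variation M f (A n)) - real N * d = (\<Sum>n<N. positive_variation M f (A n) - d)"
    by (simp add: sum_subtractf)
  also have "\<dots> \<le> (\<Sum>n<N. f (B n))"
    using approx by (intro sum_mono) (simp add: less_imp_le)
  also have "\<dots> = f (\<Union>n<N. B n)"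
    using B(1) \<open>disjoint_family_on B {..<N}\<close> by (simp add: signed_measure_UN_lessThan)
  also have "\<dots> \<le> positive_variation M f (\<Union>n. A n)"
    using B by (intro positive_variation_upper) auto
  finally have "(\<Sum>n<N. positive_variation M f (A n)) - real N * d \<le> positive_variation M f (\<Union>n. A n)" .
  moreover have "real N * d \<le> e"
    using \<open>0 < e\<close> by (simp add: d_def field_simps)
  ultimately show "(\<Sum>n<N. positive_variation M f (A n)) \<le> positive_variation M f (\<Union>n. A n) + e"
    by linarith
qed

lemma positive_variation_sums:
  fixes A :: "nat \<Rightarrow> 'a set"
  assumes A: "range A \<subseteq> sets M" and disj: "disjoint_family A"
  shows "(\<lambda>n. positive_variation M f (A n)) sums positive_variation M f (\<Union>n. A n)"
proof -
  have summable: "summable (\<lambda>n. positive_variation M f (A n))"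
    using positive_variation_sum_le[OF A disj] positive_variation_nonneg
    by (intro summableI_nonneg_bounded) auto
  have "(\<Sum>n. positive_variation M f (A n)) \<le> positive_variation M f (\<Union>n. A n)"
    using positive_variation_sum_le[OF A disj] summable by (intro suminf_le_const) auto
  moreover have "positive_variation M f (\<Union>n. A n) \<le> (\<Sum>n. positive_variation M f (A n))"
  proof (rule positive_variation_least)
    fix B
    assume B: "B \<in> sets M" "B \<subseteq> (\<Union>n. A n)"
    have "disjoint_family (\<lambda>n. B \<inter> A n)"
      using disj unfolding disjoint_family_on_def by blast
    then have "(\<lambda>n. f (B \<inter> A n)) sums f (\<Union>n. B \<inter> A n)"
      using A B by (intro signed_measure_sums) auto
    moreover have "(\<Union>n. B \<inter> A n) = B"
      using B(2) by blast
    ultimately have pieces: "(\<lambda>n. f (B \<inter> A n)) sums f B"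
      by simp
    have "f (B \<inter> A n) \<le> positive_variation M f (A n)" for n
      using A B by (intro positive_variation_upper) auto
    then show "f B \<le> (\<Sum>n. positive_variation M f (A n))"
      using pieces summable_sums[OF summable] by (rule sums_le)
  qed
  ultimately show ?thesis
    using summable by (simp add: sums_iff)
qed

end

section \<open>A finite measure dominating a complex measure\<close>

lemma signed_measure_Re_mult:
  assumes "complex_borel_measure \<mu>"
  shows "signed_measure borel (\<lambda>A. Re (c * \<mu> A))"
  unfolding signed_measure_def
proof (intro conjI allI impI)
  show "Re (c * \<mu> {}) = 0"
    using assms by (simp add: complex_borel_measure_def)
  fix A :: "nat \<Rightarrow> 'a set"
  assume "range A \<subseteq> sets borel" "disjoint_family A"
  then have "(\<lambda>n. \<mu> (A n)) sums \<mu> (\<Union>n. A n)"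
    using assms by (simp add: complex_borel_measure_def)
  then show "(\<lambda>n. Re (c * \<mu> (A n))) sums Re (c * \<mu> (\<Union>n. A n))"
    by (intro sums_Re sums_mult)
qed

lemma complex_borel_measure_Diff:
  assumes \<mu>: "complex_borel_measure \<mu>" and "A \<in> sets borel" "B \<in> sets borel" "B \<subseteq> A"
  shows "\<mu> A = \<mu> B + \<mu> (A - B)"
proof (rule complex_eqI)
  show "Re (\<mu> A) = Re (\<mu> B + \<mu> (A - B))"
    using signed_measure_Diff[OF signed_measure_Re_mult[OF \<mu>, of 1] assms(2-)] by simp
  show "Im (\<mu> A) = Im (\<mu> B + \<mu> (A - B))"
    using signed_measure_Diff[OF signed_measure_Re_mult[OF \<mu>, of "-\<i>"] assms(2-)] by simp
qed

text \<open>A complex number \<open>z\<close> with \<open>Re (c * z) \<le> 0\<close> for all four \<open>c \<in> {1, -1, \<i>, -\<i>}\<close> is \<open>0\<close>,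
  so sets of zero variation are \<open>\<mu>\<close>-null.\<close>
definition variation :: "('a::euclidean_space set \<Rightarrow> complex) \<Rightarrow> 'a set \<Rightarrow> real" where
  "variation \<mu> A = (\<Sum>c\<in>{1, -1, \<i>, -\<i>}. positive_variation borel (\<lambda>B. Re (c * \<mu> B)) A)"

definition variation_measure :: "('a::euclidean_space set \<Rightarrow> complex) \<Rightarrow> 'a measure" where
  "variation_measure \<mu> = measure_of UNIV (sets borel) (\<lambda>A. ennreal (variation \<mu> A))"

lemma sets_variation_measure [measurable_cong]: "sets (variation_measure \<mu>) = sets borel"
  unfolding variation_measure_def
  using sets.sigma_sets_eq[of borel] sets.space_closed[of borel] by (simp add: sets_measure_of)

lemma space_variation_measure: "space (variation_measure \<mu>) = UNIV"
  unfolding variation_measure_def by simp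

context
  fixes \<mu> :: "'a::euclidean_space set \<Rightarrow> complex"
  assumes \<mu>: "complex_borel_measure \<mu>"
begin

lemma variation_nonneg: "0 \<le> variation \<mu> A"
  unfolding variation_def
  using positive_variation_nonneg[OF signed_measure_Re_mult[OF \<mu>]] by (simp add: sum_nonneg)

lemma variation_empty: "variation \<mu> {} = 0"
  unfolding variation_def using positive_variation_empty[OF signed_measure_Re_mult[OF \<mu>]] by simp

lemma variation_sums:
  assumes "range A \<subseteq> sets borel" "disjoint_family A"
  shows "(\<lambda>n. variation \<mu> (A n)) sums variation \<mu> (\<Union>n. A n)"
  unfolding variation_def
  using assms by (intro sums_sum positive_variation_sums[OF signed_measure_Re_mult[OF \<mu>]])

lemma variation_eq_0_imp_eq_0:
  assumes A: "A \<in> sets borel" and "variation \<mu> A = 0"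
  shows "\<mu> A = 0"
proof -
  have nonneg: "0 \<le> positive_variation borel (\<lambda>B. Re (c * \<mu> B)) A" for c
    using positive_variation_nonneg[OF signed_measure_Re_mult[OF \<mu>]] .
  have "positive_variation borel (\<lambda>B. Re (c * \<mu> B)) A = 0" if "c \<in> {1, -1, \<i>, -\<i>}" for c
    using assms(2) that nonneg unfolding variation_def by (subst (asm) sum_nonneg_eq_0_iff) auto
  then have "Re (c * \<mu> A) \<le> 0" if "c \<in> {1, -1, \<i>, -\<i>}" for c
    using that positive_variation_upper[OF signed_measure_Re_mult[OF \<mu>] A order_refl, of c] by simp
  from this[of 1] this[of "-1"] this[of \<i>] this[of "-\<i>"] show ?thesis
    by (intro complex_eqI) simp_all
qed

lemma emeasure_variation_measure:
  "A \<in> sets borel \<Longrightarrow> emeasure (variation_measure \<mu>) A = ennreal (variation \<mu> A)"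
  unfolding variation_measure_def
proof (rule emeasure_measure_of_sigma)
  show "sigma_algebra UNIV (sets borel)"
    using sets.sigma_algebra_axioms[of borel] by simp
  show "positive (sets borel) (\<lambda>A. ennreal (variation \<mu> A))"
    unfolding positive_def by (simp add: variation_empty)
  show "countably_additive (sets borel) (\<lambda>A. ennreal (variation \<mu> A))"
    unfolding countably_additive_def
    using variation_sums variation_nonneg by (simp add: suminf_ennreal2 sums_iff)
qed

lemma finite_measure_variation_measure: "finite_measure (variation_measure \<mu>)"
  by (rule finite_measureI) (simp add: space_variation_measure emeasure_variation_measure)

lemma null_sets_variation_measure:
  assumes "A \<in> null_sets (variation_measure \<mu>)"
  shows "\<mu> A = 0"
proof -
  have A: "A \<in> sets borel"
    using null_setsD2[OF assms] by (simp add: sets_variation_measure)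
  then show ?thesis
    using assms emeasure_variation_measure[OF A] variation_nonneg
    by (intro variation_eq_0_imp_eq_0) auto
qed

lemma complex_borel_measure_eq_atom:
  assumes A: "A \<in> sets borel" "x \<in> A"
    and unique: "AE y in variation_measure \<mu>. y \<in> A \<longrightarrow> y = x"
  shows "\<mu> A = \<mu> {x}"
proof -
  have "AE y in variation_measure \<mu>. y \<notin> A - {x}"
    using unique by eventually_elim auto
  then have "A - {x} \<in> null_sets (variation_measure \<mu>)"
    using A by (subst AE_iff_null_sets) (auto simp: sets_variation_measure)
  then show ?thesis
    using complex_borel_measure_Diff[OF \<mu> A(1), of "{x}"] null_sets_variation_measure A by simp
qed

lemma continuous_measure_eq_0_if_AE_unique:
  assumes "continuous_measure \<mu>" and H: "H \<in> sets borel"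
    and unique: "AE x in variation_measure \<mu>. AE y in variation_measure \<mu>. x \<in> H \<longrightarrow> y \<in> H \<longrightarrow> y = x"
  shows "\<mu> H = 0"
proof (cases "H \<in> null_sets (variation_measure \<mu>)")
  case True
  then show ?thesis
    by (rule null_sets_variation_measure)
next
  case False
  have "\<exists>x\<in>H. AE y in variation_measure \<mu>. y \<in> H \<longrightarrow> y = x"
  proof (rule ccontr)
    assume none: "\<not> ?thesis"
    have "AE x in variation_measure \<mu>. x \<notin> H"
      using unique by eventually_elim (use none in \<open>auto elim: eventually_mono\<close>)
    then show False
      using False H by (subst (asm) AE_iff_null_sets[symmetric]) (auto simp: sets_variation_measure)
  qed
  then obtain x where "x \<in> H" "AE y in variation_measure \<mu>. y \<in> H \<longrightarrow> y = x"
    by blast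
  then show ?thesis
    using complex_borel_measure_eq_atom[OF H] assms(1) by (simp add: continuous_measure_def)
qed

end

section \<open>Surface measure on the sphere\<close>

lemma measurable_sphere_normalize:
  "(\<lambda>x::'a::euclidean_space. x /\<^sub>R norm x) \<in>
    restrict_space lborel (ball 0 1 - {0}) \<rightarrow>\<^sub>M restrict_space borel (sphere 0 1)"
  by (rule measurable_restrict_space2)
    (auto simp: space_restrict_space intro!: measurable_restrict_space1)

lemma space_sphere_measure: "space (sphere_measure :: 'a::euclidean_space measure) = sphere 0 1"
  unfolding sphere_measure_def by (simp add: space_restrict_space)

lemma sets_sphere_measure:
  "sets (sphere_measure :: 'a::euclidean_space measure) = sets (restrict_space borel (sphere 0 1))"
  unfolding sphere_measure_def by simp

lemma measurable_ident_sphere_measure [measurable]: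
  "(\<lambda>\<zeta>. \<zeta>) \<in> (sphere_measure :: 'a::euclidean_space measure) \<rightarrow>\<^sub>M borel"
  by (subst measurable_cong_sets[OF sets_sphere_measure refl])
    (rule measurable_restrict_space1[OF measurable_ident_sets[OF refl]])

lemma emeasure_sphere_measure:
  assumes A: "A \<in> sets (restrict_space borel (sphere 0 1))"
  shows "emeasure (sphere_measure :: 'a::euclidean_space measure) A
     = ennreal (real DIM('a)) * emeasure lborel ((\<lambda>x. x /\<^sub>R norm x) -` A \<inter> (ball 0 1 - {0}))"
proof -
  have cone: "(\<lambda>x::'a. x /\<^sub>R norm x) -` A \<inter> (ball 0 1 - {0}) \<in> sets lborel"
    using measurable_sets[OF measurable_sphere_normalize A]
    by (simp add: space_restrict_space sets_restrict_space_iff)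
  have "emeasure (sphere_measure :: 'a measure) A = ennreal (real DIM('a)) *
      emeasure (distr (restrict_space lborel (ball 0 1 - {0})) (restrict_space borel (sphere 0 1))
        (\<lambda>x::'a. x /\<^sub>R norm x)) A"
    unfolding sphere_measure_def using A
    by (simp add: emeasure_density nn_integral_cmult_indicator)
  also have "\<dots> = ennreal (real DIM('a)) *
      emeasure (restrict_space lborel (ball 0 1 - {0})) ((\<lambda>x. x /\<^sub>R norm x) -` A \<inter> (ball 0 1 - {0}))"
    using A measurable_sphere_normalize by (subst emeasure_distr) (auto simp: space_restrict_space)
  also have "\<dots> = ennreal (real DIM('a)) * emeasure lborel ((\<lambda>x. x /\<^sub>R norm x) -` A \<inter> (ball 0 1 - {0}))"
    using cone by (subst emeasure_restrict_space) auto
  finally show ?thesis .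
qed

lemma emeasure_space_sphere_measure:
  "emeasure (sphere_measure :: 'a::euclidean_space measure) (space sphere_measure) =
    ennreal (real DIM('a)) * emeasure lborel (ball (0::'a) 1)"
proof -
  have "sphere 0 1 \<in> sets (restrict_space borel (sphere (0::'a) 1))"
    by (simp add: sets_restrict_space_iff)
  moreover have "(\<lambda>x. x /\<^sub>R norm x) -` sphere 0 1 \<inter> (ball (0::'a) 1 - {0}) = ball 0 1 - {0}"
    by auto
  moreover have "emeasure lborel (ball (0::'a) 1 - {0}) = emeasure lborel (ball (0::'a) 1)"
    by (rule emeasure_Diff_null_set) auto
  ultimately show ?thesis
    by (subst space_sphere_measure, subst emeasure_sphere_measure) simp_all
qed

lemma finite_measure_sphere_measure: "finite_measure (sphere_measure :: 'a::euclidean_space measure)"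
  using emeasure_lborel_ball_finite[of "0::'a" 1]
  by (intro finite_measureI) (simp add: emeasure_space_sphere_measure ennreal_mult_eq_top_iff)

lemma ae_filter_sphere_measure_neq_bot: "ae_filter (sphere_measure :: 'a::euclidean_space measure) \<noteq> bot"
proof -
  have "emeasure lborel (ball (0::'a) 1) \<noteq> 0"
    using content_ball_pos[of 1 "0::'a"] by (auto simp: measure_def)
  then show ?thesis
    by (simp add: ae_filter_eq_bot_iff emeasure_space_sphere_measure)
qed

lemma AE_sphere_inner_neq_0:
  fixes v :: "'a::euclidean_space"
  assumes "v \<noteq> 0"
  shows "AE \<zeta> in sphere_measure. v \<bullet> \<zeta> \<noteq> 0"
proof -
  define N where "N = {\<zeta> \<in> sphere 0 1. v \<bullet> \<zeta> = 0}"
  have N: "N \<in> sets (restrict_space borel (sphere 0 1))"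
    by (auto simp: N_def sets_restrict_space_iff)
  have "{x. v \<bullet> x = 0} \<in> null_sets lebesgue"
    using negligible_hyperplane[of v 0] assms negligible_iff_null_sets by auto
  then have "{x. v \<bullet> x = 0} \<in> null_sets lborel"
    by (auto simp: null_sets_completion_iff)
  moreover have "(\<lambda>x. x /\<^sub>R norm x) -` N \<inter> (ball 0 1 - {0}) \<in> sets lborel"
    using measurable_sets[OF measurable_sphere_normalize N]
    by (simp add: space_restrict_space sets_restrict_space_iff)
  moreover have "(\<lambda>x. x /\<^sub>R norm x) -` N \<inter> (ball 0 1 - {0}) \<subseteq> {x. v \<bullet> x = 0}"
    by (auto simp: N_def)
  ultimately have "(\<lambda>x. x /\<^sub>R norm x) -` N \<inter> (ball 0 1 - {0}) \<in> null_sets lborel"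
    by (rule null_sets_subset)
  then have "emeasure (sphere_measure :: 'a measure) N = 0"
    using null_setsD1 by (simp add: emeasure_sphere_measure[OF N])
  then show ?thesis
    using N by (subst AE_iff_measurable[of N]) (auto simp: N_def space_sphere_measure sets_sphere_measure)
qed

lemma AE_sphere_AE_inner_neq_0:
  fixes g :: "'b \<Rightarrow> 'a::euclidean_space"
  assumes "sigma_finite_measure M" and [measurable]: "g \<in> borel_measurable M"
  shows "AE \<zeta> in sphere_measure. AE p in M. g p \<noteq> 0 \<longrightarrow> g p \<bullet> \<zeta> \<noteq> 0"
proof -
  interpret sphere: finite_measure "sphere_measure :: 'a measure"
    by (rule finite_measure_sphere_measure)
  interpret pair_sigma_finite M "sphere_measure :: 'a measure"
    using assms(1) by (simp add: pair_sigma_finite_def sphere.sigma_finite_measure_axioms)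
  have "AE p in M. AE \<zeta> in sphere_measure. g p \<noteq> 0 \<longrightarrow> g p \<bullet> \<zeta> \<noteq> 0"
  proof (rule AE_I2)
    fix p
    show "AE \<zeta> in sphere_measure. g p \<noteq> 0 \<longrightarrow> g p \<bullet> \<zeta> \<noteq> 0"
      using AE_sphere_inner_neq_0[of "g p"] by (cases "g p = 0") simp_all
  qed
  then show ?thesis
    by (subst (asm) AE_commute) measurable
qed

section \<open>Atoms of projections\<close>

lemma proj_measure_singleton: "proj_measure \<mu> \<zeta> {t} = \<mu> {x. x \<bullet> \<zeta> = t}"
  by (simp add: proj_measure_def vimage_def)

context
  fixes \<mu> :: "'a::euclidean_space set \<Rightarrow> complex"
  assumes \<mu>: "complex_borel_measure \<mu>"
begin

lemma AE_continuous_proj_measure: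
  assumes continuous: "continuous_measure \<mu>"
  shows "AE \<zeta> in sphere_measure. continuous_measure (proj_measure \<mu> \<zeta>)"
proof -
  let ?\<nu> = "variation_measure \<mu>"
  interpret \<nu>: finite_measure ?\<nu>
    by (rule finite_measure_variation_measure[OF \<mu>])
  interpret \<nu>\<nu>: pair_sigma_finite ?\<nu> ?\<nu> ..
  have "AE \<zeta> in sphere_measure. AE p in ?\<nu> \<Otimes>\<^sub>M ?\<nu>. fst p - snd p \<noteq> 0 \<longrightarrow> (fst p - snd p) \<bullet> \<zeta> \<noteq> 0"
    using \<nu>.sigma_finite_measure_axioms
    by (intro AE_sphere_AE_inner_neq_0 sigma_finite_pair_measure) measurable
  then have "AE \<zeta> in sphere_measure. AE x in ?\<nu>. AE y in ?\<nu>. x \<noteq> y \<longrightarrow> (x - y) \<bullet> \<zeta> \<noteq> 0"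
    by eventually_elim (drule \<nu>\<nu>.AE_pair, simp)
  then show ?thesis
  proof eventually_elim
    case (elim \<zeta>)
    have "AE x in ?\<nu>. AE y in ?\<nu>. x \<bullet> \<zeta> = t \<longrightarrow> y \<bullet> \<zeta> = t \<longrightarrow> y = x" for t
      using elim by eventually_elim (auto elim!: eventually_mono simp: inner_diff_left)
    then have "\<mu> {x. x \<bullet> \<zeta> = t} = 0" for t
      by (intro continuous_measure_eq_0_if_AE_unique[OF \<mu> continuous]) auto
    then show ?case
      by (simp add: continuous_measure_def proj_measure_singleton)
  qed
qed

lemma continuous_measure_if_AE_continuous_proj_measure:
  assumes ae: "AE \<zeta> in (sphere_measure :: 'a measure). continuous_measure (proj_measure \<mu> \<zeta>)"
  shows "continuous_measure \<mu>"
  unfolding continuous_measure_def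
proof (rule allI, rule ccontr)
  fix x0
  assume atom: "\<mu> {x0} \<noteq> 0"
  interpret \<nu>: finite_measure "variation_measure \<mu>"
    by (rule finite_measure_variation_measure[OF \<mu>])
  have "AE \<zeta> in sphere_measure. AE x in variation_measure \<mu>. x - x0 \<noteq> 0 \<longrightarrow> (x - x0) \<bullet> \<zeta> \<noteq> 0"
    by (rule AE_sphere_AE_inner_neq_0[OF \<nu>.sigma_finite_measure_axioms])
      (simp add: measurable_cong_sets[OF sets_variation_measure refl])
  then have "AE \<zeta> in (sphere_measure :: 'a measure). False"
    using ae
  proof eventually_elim
    case (elim \<zeta>)
    have "\<mu> {x. x \<bullet> \<zeta> = x0 \<bullet> \<zeta>} = \<mu> {x0}"
      using elim(1) by (intro complex_borel_measure_eq_atom[OF \<mu>])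
        (auto elim!: eventually_mono simp: inner_diff_left)
    then show False
      using elim(2) atom by (simp add: continuous_measure_def proj_measure_singleton)
  qed
  then show False
    using ae_filter_sphere_measure_neq_bot[where 'a='a] by (simp add: eventually_const_iff)
qed

end

theorem lemma5p4:
  fixes \<mu> :: "'a::euclidean_space set \<Rightarrow> complex"
  assumes "complex_borel_measure \<mu>"
    and "compactly_supported \<mu>"
  shows "continuous_measure \<mu> \<longleftrightarrow>
         (AE \<zeta> in (sphere_measure :: 'a measure). continuous_measure (proj_measure \<mu> \<zeta>))"
  using AE_continuous_proj_measure continuous_measure_if_AE_continuous_proj_measure assms(1)
  by blast

end
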